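(* Let $\mathcal A\in\mathbb C^{n_1\times n_2\times n_3}$ and $\mathcal A^-\in\mathcal A\{1\}$. Then $\mathcal X=\mathcal A^{-,*}=\mathcal A^-\mathcal A\mathcal A^*$ is the unique $\mathcal X\in\mathbb C^{n_2\times n_1\times n_3}$ satisfying $$\mathcal X(\mathcal A^\dagger)^*\mathcal X=\mathcal X,\qquad \mathcal A\mathcal X=\mathcal A\mathcal A^*,\qquad \mathcal X(\mathcal A^\dagger)^*=\mathcal A^-\mathcal A.$$
   Context: Fix a nonsingular matrix $M\in\mathbb C^{n_3\times n_3}$. For $\mathcal C\in\mathbb C^{n_1\times n_2\times n_3}$ let $\widehat{\mathcal C}=\mathcal C\times_3M$, i.e. $\widehat{\mathcal C}_{ijk}=\sum_{l=1}^{n_3}M_{kl}\mathcal C_{ijl}$, and let $\widehat{\mathcal C}^{(i)}$ denote its $i$-th frontal slice. The M-product $\mathcal C\star_M\mathcal D$ of $\mathcal C\in\mathbb C^{n_1\times n_2\times n_3}$ and $\mathcal D\in\mathbb C^{n_2\times l\times n_3}$ is the unique tensor with $\widehat{\mathcal C\star_M\mathcal D}^{(i)}=\widehat{\mathcal C}^{(i)}\widehat{\mathcal D}^{(i)}$ for all $i\in[n_3]$. Juxtaposition of tensors denotes the M-product. The conjugate transpose $\mathcal A^*$ is defined by $\widehat{\mathcal A^*}^{(i)}=(\widehat{\mathcal A}^{(i)})^*$. The Moore–Penrose inverse $\mathcal A^\dagger$ is the unique $\mathcal W$ satisfying $\mathcal A\mathcal W\mathcal A=\mathcal A$, $\mathcal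 W\mathcal A\mathcal W=\mathcal W$, $(\mathcal A\mathcal W)^*=\mathcal A\mathcal W$, $(\mathcal W\mathcal A)^*=\mathcal W\mathcal A$. $\mathcal A\{1\}$ is the set of all $\mathcal W$ with $\mathcal A\mathcal W\mathcal A=\mathcal A$. The 1-Star inverse associated with $\mathcal A^-$ is $\mathcal A^{-,*}=\mathcal A^-\mathcal A\mathcal A^*$. *)

theory Defs
  imports Complex_Main "Jordan_Normal_Form.Matrix"
begin

text \<open>The transform matrix M is an n3 x n3 complex matrix (n3 = dim_row M).\<close>

type_synonym tensor = "nat \<Rightarrow> nat \<Rightarrow> nat \<Rightarrow> complex"

definition tensors :: "nat \<Rightarrow> nat \<Rightarrow> nat \<Rightarrow> tensor set" where
  "tensors n1 n2 n3 = {C. \<forall>i j k. (n1 \<le> i \<or> n2 \<le> j \<or> n3 \<le> k) \<longrightarrow> C i j k = 0}"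

definition mhat :: "complex mat \<Rightarrow> tensor \<Rightarrow> tensor" where
  "mhat M C = (\<lambda>i j k. \<Sum>l<dim_col M. M $$ (k, l) * C i j l)"

definition mprod :: "complex mat \<Rightarrow> nat \<Rightarrow> nat \<Rightarrow> nat \<Rightarrow> tensor \<Rightarrow> tensor \<Rightarrow> tensor" where
  "mprod M n1 n2 l C D = (THE E. E \<in> tensors n1 l (dim_row M) \<and>
     (\<forall>i<n1. \<forall>j<l. \<forall>k<dim_row M.
        mhat M E i j k = (\<Sum>m<n2. mhat M C i m k * mhat M D m j k)))"

definition ctrans :: "complex mat \<Rightarrow> nat \<Rightarrow> nat \<Rightarrow> tensor \<Rightarrow> tensor" where
  "ctrans M n1 n2 A = (THE E. E \<in> tensors n2 n1 (dim_row M) \<and>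
     (\<forall>i<n2. \<forall>j<n1. \<forall>k<dim_row M. mhat M E i j k = cnj (mhat M A j i k)))"

definition mpinv :: "complex mat \<Rightarrow> nat \<Rightarrow> nat \<Rightarrow> tensor \<Rightarrow> tensor" where
  "mpinv M n1 n2 A = (THE W. W \<in> tensors n2 n1 (dim_row M) \<and>
     mprod M n1 n1 n2 (mprod M n1 n2 n1 A W) A = A \<and>
     mprod M n2 n2 n1 (mprod M n2 n1 n2 W A) W = W \<and>
     ctrans M n1 n1 (mprod M n1 n2 n1 A W) = mprod M n1 n2 n1 A W \<and>
     ctrans M n2 n2 (mprod M n2 n1 n2 W A) = mprod M n2 n1 n2 W A)"

definition inv1 :: "complex mat \<Rightarrow> nat \<Rightarrow> nat \<Rightarrow> tensor \<Rightarrow> tensor set" where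
  "inv1 M n1 n2 A = {W. W \<in> tensors n2 n1 (dim_row M) \<and>
     mprod M n1 n1 n2 (mprod M n1 n2 n1 A W) A = A}"

definition one_star :: "complex mat \<Rightarrow> nat \<Rightarrow> nat \<Rightarrow> tensor \<Rightarrow> tensor \<Rightarrow> tensor" where
  "one_star M n1 n2 A Am = mprod M n2 n2 n1 (mprod M n2 n1 n2 Am A) (ctrans M n1 n2 A)"

end

theory Submission
  imports Defs "Jordan_Normal_Form.Gauss_Jordan_Elimination"
begin

(* Since M is invertible, the transform along the third mode is a bijection on tensors of a
   given size under which the M-product, the conjugate transpose and hence the Moore-Penrose
   inverse all act frontal slice by frontal slice.  Everything therefore reduces to complex
   matrices: if A G A = A and W is the Moore-Penrose inverse of A, then X = G A A* satisfies
   X W* X = X, A X = A A* and X W* = G A (because A* W* = (W A)* = W A), and conversely any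
   such X equals X W* X = G A X = G A A*.  Since mpinv is a definite description, the existence
   of the Moore-Penrose inverse of each slice is needed as well; it is given by the formula
   A* G2 A G1 A* with g-inverses G1 of A* A and G2 of A A*, which exist by Gauss-Jordan
   elimination. *)

(* G sends each nonzero row to its pivot column, so R * G is the identity on the nonzero rows. *)
lemma pivot_fun_g_inverse:
  fixes R :: "'a::field mat"
  assumes R: "R \<in> carrier_mat nr nc" and pf: "pivot_fun R f nc"
  defines "G \<equiv> mat nc nr (\<lambda>(j,i). if f i < nc \<and> j = f i then 1 else 0)"
  shows "R * G * R = R"
proof -
  have dR: "dim_row R = nr" "dim_col R = nc" using R by auto
  note piv = pivot_funD[OF dR(1) pf]
  have RG: "(R * G) $$ (k,i) = (if f i < nc \<and> k = i then 1 else 0)" if "k < nr" "i < nr" for k i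
  proof -
    have "(R * G) $$ (k,i) = (\<Sum>j<nc. R $$ (k,j) * (if f i < nc \<and> j = f i then 1 else 0))"
      using that dR by (simp add: G_def scalar_prod_def lessThan_atLeast0)
    also have "\<dots> = (if f i < nc then R $$ (k, f i) else 0)"
      by (simp add: if_distrib[of "\<lambda>x. _ * x"] sum.delta cong: if_cong)
    also have "\<dots> = (if f i < nc \<and> k = i then 1 else 0)"
      using piv(4)[OF that(2)] piv(5)[OF that(2) _ that(1)] by auto
    finally show ?thesis .
  qed
  show ?thesis
  proof (rule eq_matI)
    fix k l assume k: "k < dim_row R" and l: "l < dim_col R"
    have "(R * G * R) $$ (k,l) = (\<Sum>i<nr. (R*G) $$ (k,i) * R $$ (i,l))"
      using k l dR by (simp add: G_def scalar_prod_def lessThan_atLeast0)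
    also have "\<dots> = (\<Sum>i<nr. (if k = i then (if f i < nc then R $$ (i,l) else 0) else 0))"
      using k dR by (intro sum.cong refl) (simp add: RG)
    also have "\<dots> = (if f k < nc then R $$ (k,l) else 0)"
      using k dR by simp
    also have "\<dots> = R $$ (k,l)"
      using piv(1)[of k] piv(2)[of k l] k l dR by auto
    finally show "(R * G * R) $$ (k,l) = R $$ (k,l)" .
  qed (use R in \<open>auto simp: G_def\<close>)
qed

lemma g_inverse_exists:
  fixes A :: "'a::field mat"
  assumes A: "A \<in> carrier_mat nr nc"
  shows "\<exists>G \<in> carrier_mat nc nr. A * G * A = A"
proof -
  obtain R B' where res: "gauss_jordan A (0\<^sub>m nr 0) = (R, B')" by (cases "gauss_jordan A (0\<^sub>m nr 0)")
  from gauss_jordan_transform[OF A _ res, of 0 "()"] obtain P where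
    P: "P \<in> Units (ring_mat TYPE('a) nr ())" and RP: "R = P * A" by auto
  from P obtain Q where Pc: "P \<in> carrier_mat nr nr" and Qc: "Q \<in> carrier_mat nr nr"
    and QP: "Q * P = 1\<^sub>m nr" and PQ: "P * Q = 1\<^sub>m nr"
    unfolding Units_def ring_mat_def by auto
  have Rc: "R \<in> carrier_mat nr nc" using RP Pc A by auto
  from gauss_jordan_row_echelon[OF A res] obtain f where pf: "pivot_fun R f (dim_col R)"
    unfolding row_echelon_form_def by auto
  hence pf': "pivot_fun R f nc" using Rc by auto
  define G where "G = mat nc nr (\<lambda>(j,i). if f i < nc \<and> j = f i then 1 else (0::'a))"
  have Gc: "G \<in> carrier_mat nc nr" by (simp add: G_def)
  have RGR: "R * G * R = R" using pivot_fun_g_inverse[OF Rc pf'] unfolding G_def .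
  have AQR: "A = Q * R"
    using RP QP Pc Qc A by (simp add: assoc_mult_mat[symmetric, of Q nr nr P nr A nc])
  have "A * (G * P) * A = Q * (R * G * R)"
    using AQR Gc Pc Qc Rc PQ
    by (smt (verit) assoc_mult_mat left_mult_one_mat mult_carrier_mat)
  also have "\<dots> = A" using RGR AQR by simp
  finally show ?thesis using Gc Pc by (intro bexI[of _ "G * P"]) auto
qed

definition adjoint :: "complex mat \<Rightarrow> complex mat" where
  "adjoint A = mat (dim_col A) (dim_row A) (\<lambda>(i,j). cnj (A $$ (j,i)))"

lemma adjoint_dim[simp]: "dim_row (adjoint A) = dim_col A" "dim_col (adjoint A) = dim_row A"
  by (auto simp: adjoint_def)

lemma index_adjoint[simp]:
  "i < dim_col A \<Longrightarrow> j < dim_row A \<Longrightarrow> adjoint A $$ (i,j) = cnj (A $$ (j,i))"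
  by (auto simp: adjoint_def)

lemma adjoint_carrier_mat: "A \<in> carrier_mat n m \<Longrightarrow> adjoint A \<in> carrier_mat m n"
  by (intro carrier_matI) (auto dest: carrier_matD)

lemma adjoint_adjoint[simp]: "adjoint (adjoint A) = A"
  by (rule eq_matI) auto

lemma adjoint_mult:
  assumes "dim_col A = dim_row B"
  shows "adjoint (A * B) = adjoint B * adjoint A"
proof (rule eq_matI)
  fix i j assume "i < dim_row (adjoint B * adjoint A)" "j < dim_col (adjoint B * adjoint A)"
  thus "adjoint (A * B) $$ (i, j) = (adjoint B * adjoint A) $$ (i, j)"
    using assms by (simp add: scalar_prod_def) (intro sum.cong refl; simp add: mult.commute)
qed auto

lemma adjoint_mult_self_eq_zero:
  assumes B: "B \<in> carrier_mat n m" and zero: "adjoint B * B = 0\<^sub>m m m"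
  shows "B = 0\<^sub>m n m"
proof (rule eq_matI)
  fix i j assume i: "i < dim_row (0\<^sub>m n m)" and j: "j < dim_col (0\<^sub>m n m)"
  have "(\<Sum>k<n. cnj (B $$ (k,j)) * B $$ (k,j)) = 0"
    using B j arg_cong[OF zero, of "\<lambda>C. C $$ (j,j)"] by (simp add: scalar_prod_def lessThan_atLeast0)
  hence "(\<Sum>k<n. complex_of_real ((cmod (B $$ (k,j)))\<^sup>2)) = 0"
    by (metis (no_types, lifting) complex_norm_square mult.commute sum.cong)
  hence "(\<Sum>k<n. (cmod (B $$ (k,j)))\<^sup>2) = 0"
    by (metis of_real_0 of_real_eq_iff of_real_sum)
  hence "\<forall>k\<in>{..<n}. (cmod (B $$ (k,j)))\<^sup>2 = 0"
    by (subst sum_nonneg_eq_0_iff[symmetric]) auto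
  thus "B $$ (i, j) = 0\<^sub>m n m $$ (i, j)" using i j by auto
qed (use B in auto)

lemma assoc_mult_mat_dims:
  "dim_col A = dim_row B \<Longrightarrow> dim_col B = dim_row C \<Longrightarrow> A * B * C = A * (B * (C :: 'a :: semiring_0 mat))"
  by (rule assoc_mult_mat[of A "dim_row A" "dim_col A" B "dim_col B" C "dim_col C"]) auto

lemma eq_of_minus_eq_zero_mat:
  fixes A B :: "'a :: ab_group_add mat"
  assumes A: "A \<in> carrier_mat n m" and B: "B \<in> carrier_mat n m" and diff: "A - B = 0\<^sub>m n m"
  shows "A = B"
proof (rule eq_matI)
  fix i j assume ij: "i < dim_row B" "j < dim_col B"
  have "A $$ (i,j) - B $$ (i,j) = (A - B) $$ (i,j)" using ij by simp
  also have "\<dots> = 0" using ij B by (simp add: diff)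
  finally show "A $$ (i,j) = B $$ (i,j)" by simp
qed (use A B in auto)

lemma gram_cancel_left:
  assumes A: "A \<in> carrier_mat n1 n2" and X: "X \<in> carrier_mat n2 m" and Y: "Y \<in> carrier_mat n2 m"
    and eq: "adjoint A * A * X = adjoint A * A * Y"
  shows "A * X = A * Y"
proof -
  define D where "D = A * (X - Y)"
  have XY: "X - Y \<in> carrier_mat n2 m" using Y by (rule minus_carrier_mat)
  have AA: "adjoint A * A \<in> carrier_mat n2 n2" using adjoint_carrier_mat[OF A] A by (rule mult_carrier_mat)
  have D: "D \<in> carrier_mat n1 m" using A XY by (simp add: D_def)
  have "adjoint A * D = adjoint A * A * (X - Y)"
    unfolding D_def using assoc_mult_mat[OF adjoint_carrier_mat[OF A] A XY] ..
  also have "\<dots> = adjoint A * A * X - adjoint A * A * Y"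
    by (rule mult_minus_distrib_mat[OF AA X Y])
  also have "\<dots> = 0\<^sub>m n2 m"
    unfolding eq using AA Y by simp
  finally have AD: "adjoint A * D = 0\<^sub>m n2 m" .
  have "adjoint D = adjoint (X - Y) * adjoint A"
    unfolding D_def by (rule adjoint_mult) (metis A XY carrier_matD)
  hence "adjoint D * D = adjoint (X - Y) * (adjoint A * D)"
    using assoc_mult_mat[OF adjoint_carrier_mat[OF XY] adjoint_carrier_mat[OF A] D] by simp
  hence "adjoint D * D = 0\<^sub>m m m"
    using right_mult_zero_mat[OF adjoint_carrier_mat[OF XY]] by (simp add: AD)
  hence "D = 0\<^sub>m n1 m" by (rule adjoint_mult_self_eq_zero[OF D])
  hence "A * X - A * Y = 0\<^sub>m n1 m" unfolding D_def by (simp add: mult_minus_distrib_mat[OF A X Y])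
  thus ?thesis by (rule eq_of_minus_eq_zero_mat[OF mult_carrier_mat[OF A X] mult_carrier_mat[OF A Y]])
qed

lemma gram_g_inverse_absorb:
  assumes A: "A \<in> carrier_mat n1 n2" and G: "G \<in> carrier_mat n2 n2"
    and g: "adjoint A * A * G * (adjoint A * A) = adjoint A * A"
  shows "A * G * (adjoint A * A) = A"
proof -
  note d = carrier_matD[OF A] carrier_matD[OF G]
  have GAA: "G * (adjoint A * A) \<in> carrier_mat n2 n2"
    using G mult_carrier_mat[OF adjoint_carrier_mat[OF A] A] by (rule mult_carrier_mat)
  have "adjoint A * A * (G * (adjoint A * A)) = adjoint A * A * 1\<^sub>m n2"
    using g d by (simp add: assoc_mult_mat_dims)
  hence "A * (G * (adjoint A * A)) = A * 1\<^sub>m n2"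
    by (rule gram_cancel_left[OF A GAA one_carrier_mat])
  thus ?thesis using d by (simp add: assoc_mult_mat_dims)
qed

lemma gram_g_inverse_hermitian:
  assumes A: "A \<in> carrier_mat n1 n2" and G: "G \<in> carrier_mat n2 n2"
    and g: "adjoint A * A * G * (adjoint A * A) = adjoint A * A"
  shows "adjoint (A * G * adjoint A) = A * G * adjoint A"
proof -
  note d = carrier_matD[OF A] carrier_matD[OF G]
  have "adjoint (adjoint A * A * G * (adjoint A * A)) = adjoint (adjoint A * A)" using g by simp
  hence g': "adjoint A * A * adjoint G * (adjoint A * A) = adjoint A * A"
    using d by (simp add: adjoint_mult assoc_mult_mat_dims)
  have e1: "A * (adjoint G * (adjoint A * A)) = A"
    using gram_g_inverse_absorb[OF A adjoint_carrier_mat[OF G] g'] d by (simp add: assoc_mult_mat_dims)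
  have "adjoint (A * adjoint G * (adjoint A * A)) = adjoint A"
    using e1 d by (simp add: assoc_mult_mat_dims)
  hence e2: "adjoint A * (A * (G * adjoint A)) = adjoint A"
    using d by (simp add: adjoint_mult assoc_mult_mat_dims)
  have "adjoint (A * G * adjoint A) = A * (adjoint G * adjoint A)"
    using d by (simp add: adjoint_mult assoc_mult_mat_dims)
  also have "\<dots> = A * (adjoint G * (adjoint A * (A * (G * adjoint A))))" using e2 by simp
  also have "\<dots> = A * (adjoint G * (adjoint A * A)) * (G * adjoint A)"
    using d by (simp add: assoc_mult_mat_dims)
  also have "\<dots> = A * G * adjoint A" using e1 d by (simp add: assoc_mult_mat_dims)
  finally show ?thesis .
qed

definition moore_penrose :: "complex mat \<Rightarrow> complex mat \<Rightarrow> bool" where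
  "moore_penrose A W \<longleftrightarrow>
     A * W * A = A \<and> W * A * W = W \<and> adjoint (A * W) = A * W \<and> adjoint (W * A) = W * A"

lemma moore_penrose_formula:
  assumes A: "A \<in> carrier_mat n1 n2" and G1: "G1 \<in> carrier_mat n2 n2" and G2: "G2 \<in> carrier_mat n1 n1"
    and g1: "adjoint A * A * G1 * (adjoint A * A) = adjoint A * A"
    and g2: "A * adjoint A * G2 * (A * adjoint A) = A * adjoint A"
  shows "moore_penrose A (adjoint A * G2 * A * G1 * adjoint A)"
proof -
  have A': "adjoint A \<in> carrier_mat n2 n1" using A by (rule adjoint_carrier_mat)
  note d = carrier_matD[OF A] carrier_matD[OF G1] carrier_matD[OF G2]
  have g2': "adjoint (adjoint A) * adjoint A * G2 * (adjoint (adjoint A) * adjoint A)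
      = adjoint (adjoint A) * adjoint A"
    using g2 by simp
  have f1: "A * G1 * (adjoint A * A) = A" by (rule gram_g_inverse_absorb[OF A G1 g1])
  have f2: "adjoint (A * G1 * adjoint A) = A * G1 * adjoint A"
    by (rule gram_g_inverse_hermitian[OF A G1 g1])
  have "adjoint A * G2 * (A * adjoint A) = adjoint A"
    using gram_g_inverse_absorb[OF A' G2 g2'] by simp
  hence "adjoint (adjoint A * G2 * (A * adjoint A)) = A" by simp
  hence f3: "A * adjoint A * adjoint G2 * A = A" using d by (simp add: adjoint_mult assoc_mult_mat_dims)
  have f4: "adjoint (adjoint A * G2 * A) = adjoint A * G2 * A"
    using gram_g_inverse_hermitian[OF A' G2 g2'] by simp
  hence "adjoint A * adjoint G2 * A = adjoint A * G2 * A"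
    using d by (simp add: adjoint_mult assoc_mult_mat_dims)
  with f3 have f5: "A * adjoint A * G2 * A = A" using d by (simp add: assoc_mult_mat_dims)
  define W where "W = adjoint A * G2 * A * G1 * adjoint A"
  have AW: "A * W = A * G1 * adjoint A"
  proof -
    have "A * W = (A * adjoint A * G2 * A) * (G1 * adjoint A)"
      using d by (simp add: W_def assoc_mult_mat_dims)
    also have "\<dots> = A * G1 * adjoint A" using f5 d by (simp add: assoc_mult_mat_dims)
    finally show ?thesis .
  qed
  have WA: "W * A = adjoint A * G2 * A"
  proof -
    have "W * A = (adjoint A * G2) * (A * G1 * (adjoint A * A))"
      using d by (simp add: W_def assoc_mult_mat_dims)
    also have "\<dots> = adjoint A * G2 * A" using f1 d by (simp add: assoc_mult_mat_dims)
    finally show ?thesis .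
  qed
  have "A * W * A = A" using AW f1 d by (simp add: assoc_mult_mat_dims)
  moreover have "W * A * W = W"
  proof -
    have "W * A * W = adjoint A * G2 * (A * adjoint A * G2 * A) * G1 * adjoint A"
      using WA d by (simp add: W_def assoc_mult_mat_dims)
    also have "\<dots> = W" using f5 d by (simp add: W_def assoc_mult_mat_dims)
    finally show ?thesis .
  qed
  ultimately show ?thesis unfolding moore_penrose_def W_def[symmetric] using AW WA f2 f4 by simp
qed

lemma moore_penrose_exists:
  assumes A: "A \<in> carrier_mat n1 n2"
  obtains W where "W \<in> carrier_mat n2 n1" "moore_penrose A W"
proof -
  have A': "adjoint A \<in> carrier_mat n2 n1" using A by (rule adjoint_carrier_mat)
  obtain G1 where G1: "G1 \<in> carrier_mat n2 n2" and g1: "adjoint A * A * G1 * (adjoint A * A) = adjoint A * A"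
    using g_inverse_exists[OF mult_carrier_mat[OF A' A]] by auto
  obtain G2 where G2: "G2 \<in> carrier_mat n1 n1" and g2: "A * adjoint A * G2 * (A * adjoint A) = A * adjoint A"
    using g_inverse_exists[OF mult_carrier_mat[OF A A']] by auto
  show ?thesis
  proof
    show "adjoint A * G2 * A * G1 * adjoint A \<in> carrier_mat n2 n1"
      using A A' G1 G2 by (meson mult_carrier_mat)
  qed (rule moore_penrose_formula[OF A G1 G2 g1 g2])
qed

lemma moore_penrose_unique:
  assumes A: "A \<in> carrier_mat n1 n2" and W: "W \<in> carrier_mat n2 n1" and V: "V \<in> carrier_mat n2 n1"
    and mW: "moore_penrose A W" and mV: "moore_penrose A V"
  shows "W = V"
proof -
  note d = carrier_matD[OF A] carrier_matD[OF W] carrier_matD[OF V]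
  from mW have w1: "A * W * A = A" and w2: "W * A * W = W"
    and w3: "adjoint W * adjoint A = A * W" and w4: "adjoint A * adjoint W = W * A"
    unfolding moore_penrose_def using d by (auto simp: adjoint_mult)
  from mV have v1: "A * V * A = A" and v2: "V * A * V = V"
    and v3: "adjoint V * adjoint A = A * V" and v4: "adjoint A * adjoint V = V * A"
    unfolding moore_penrose_def using d by (auto simp: adjoint_mult)
  have aV: "adjoint A * adjoint V * adjoint A = adjoint A"
    using arg_cong[OF v1, of adjoint] d by (simp add: adjoint_mult assoc_mult_mat_dims)
  have aW: "adjoint A * adjoint W * adjoint A = adjoint A"
    using arg_cong[OF w1, of adjoint] d by (simp add: adjoint_mult assoc_mult_mat_dims)
  have "W = W * (adjoint W * adjoint A)" using w2 w3 d by (simp add: assoc_mult_mat_dims)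
  also have "\<dots> = W * adjoint W * (adjoint A * adjoint V * adjoint A)"
    using aV d by (simp add: assoc_mult_mat_dims)
  also have "\<dots> = W * (adjoint W * adjoint A) * (adjoint V * adjoint A)"
    using d by (simp add: assoc_mult_mat_dims)
  also have "\<dots> = (W * A * W) * A * V" using w3 v3 d by (simp add: assoc_mult_mat_dims)
  finally have eW: "W = W * A * V" using w2 by simp
  have "V = (adjoint A * adjoint V) * V" using v2 v4 d by (simp add: assoc_mult_mat_dims)
  also have "\<dots> = (adjoint A * adjoint W * adjoint A) * adjoint V * V"
    using aW by simp
  also have "\<dots> = (adjoint A * adjoint W) * (adjoint A * adjoint V) * V"
    using d by (simp add: assoc_mult_mat_dims)
  also have "\<dots> = W * A * (V * A * V)" using w4 v4 d by (simp add: assoc_mult_mat_dims)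
  finally have eV: "V = W * A * V" using v2 by simp
  show ?thesis using eW eV by simp
qed

lemma one_star_mat_iff:
  assumes A: "A \<in> carrier_mat n1 n2" and G: "G \<in> carrier_mat n2 n1" and g: "A * G * A = A"
    and W: "W \<in> carrier_mat n2 n1" and mp: "moore_penrose A W" and X: "X \<in> carrier_mat n2 n1"
  shows "(X * adjoint W * X = X \<and> A * X = A * adjoint A \<and> X * adjoint W = G * A)
    \<longleftrightarrow> X = G * A * adjoint A"
proof
  note d = carrier_matD[OF A] carrier_matD[OF G] carrier_matD[OF W] carrier_matD[OF X]
  assume "X * adjoint W * X = X \<and> A * X = A * adjoint A \<and> X * adjoint W = G * A"
  hence x1: "X * adjoint W * X = X" and x2: "A * X = A * adjoint A" and x3: "X * adjoint W = G * A"
    by auto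
  have "X = G * A * X" using x1 x3 by simp
  also have "\<dots> = G * (A * adjoint A)" using x2 d by (simp add: assoc_mult_mat_dims)
  finally show "X = G * A * adjoint A" using d by (simp add: assoc_mult_mat_dims)
next
  note d = carrier_matD[OF A] carrier_matD[OF G] carrier_matD[OF W]
  assume X0: "X = G * A * adjoint A"
  have "adjoint A * adjoint W = W * A"
    using mp d unfolding moore_penrose_def by (metis adjoint_mult)
  hence XW: "X * adjoint W = G * (A * W * A)" unfolding X0 using d by (simp add: assoc_mult_mat_dims)
  have "A * X = A * G * A * adjoint A" unfolding X0 using d by (simp add: assoc_mult_mat_dims)
  hence AX: "A * X = A * adjoint A" using g by simp
  have "X * adjoint W * X = G * (A * X)" using XW mp d
    unfolding X0 moore_penrose_def by (simp add: assoc_mult_mat_dims)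
  thus "X * adjoint W * X = X \<and> A * X = A * adjoint A \<and> X * adjoint W = G * A"
    using XW AX mp d unfolding moore_penrose_def by (simp add: X0 assoc_mult_mat_dims)
qed

locale mode3_transform =
  fixes M :: "complex mat" and n3 :: nat
  assumes M_carrier: "M \<in> carrier_mat n3 n3" and M_invertible: "invertible_mat M"
begin

lemma dim_row_M[simp]: "dim_row M = n3"
  using M_carrier by simp

lemma obtain_inverse:
  obtains B where "B \<in> carrier_mat n3 n3" "M * B = 1\<^sub>m n3" "B * M = 1\<^sub>m n3"
proof -
  from M_invertible obtain B where "inverts_mat M B" "inverts_mat B M"
    unfolding invertible_mat_def by auto
  hence MB: "M * B = 1\<^sub>m n3" and BM: "B * M = 1\<^sub>m (dim_row B)"
    unfolding inverts_mat_def by auto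
  have "B \<in> carrier_mat n3 n3"
    using arg_cong[OF MB, of dim_col] arg_cong[OF BM, of dim_col] M_carrier by auto
  with MB BM show ?thesis using that by auto
qed

lemma mhat_eq_mult_mat_vec:
  "k < n3 \<Longrightarrow> mhat M E i j k = (M *\<^sub>v vec n3 (E i j)) $ k"
  using M_carrier by (simp add: mhat_def scalar_prod_def lessThan_atLeast0)

lemma mhat_inject:
  assumes E: "E \<in> tensors a b n3" and F: "F \<in> tensors a b n3"
    and eq: "\<And>i j k. i < a \<Longrightarrow> j < b \<Longrightarrow> k < n3 \<Longrightarrow> mhat M E i j k = mhat M F i j k"
  shows "E = F"
proof (intro ext)
  fix i j l
  obtain B where B: "B \<in> carrier_mat n3 n3" "B * M = 1\<^sub>m n3" by (rule obtain_inverse)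
  show "E i j l = F i j l"
  proof (cases "i < a \<and> j < b \<and> l < n3")
    case True
    have "M *\<^sub>v vec n3 (E i j) = M *\<^sub>v vec n3 (F i j)"
    proof (rule eq_vecI)
      fix k assume "k < dim_vec (M *\<^sub>v vec n3 (F i j))"
      hence k: "k < n3" using M_carrier by simp
      show "(M *\<^sub>v vec n3 (E i j)) $ k = (M *\<^sub>v vec n3 (F i j)) $ k"
        using eq[of i j k] True k by (simp add: mhat_eq_mult_mat_vec)
    qed simp
    hence "B *\<^sub>v (M *\<^sub>v vec n3 (E i j)) = B *\<^sub>v (M *\<^sub>v vec n3 (F i j))" by simp
    hence "vec n3 (E i j) = vec n3 (F i j)"
      using B M_carrier by (simp add: assoc_mult_mat_vec[symmetric, of B n3 n3 M])
    thus ?thesis using True by (metis index_vec)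
  next
    case False
    thus ?thesis using E F unfolding tensors_def by auto
  qed
qed

lemma mhat_surj:
  "\<exists>E \<in> tensors a b n3. \<forall>i<a. \<forall>j<b. \<forall>k<n3. mhat M E i j k = S i j k"
proof -
  obtain B where B: "B \<in> carrier_mat n3 n3" "M * B = 1\<^sub>m n3" by (rule obtain_inverse)
  define E where "E = (\<lambda>i j l. if i < a \<and> j < b \<and> l < n3 then (B *\<^sub>v vec n3 (S i j)) $ l else 0)"
  have "mhat M E i j k = S i j k" if ijk: "i < a" "j < b" "k < n3" for i j k
  proof -
    have "vec n3 (E i j) = B *\<^sub>v vec n3 (S i j)"
      using ijk B by (intro eq_vecI) (auto simp: E_def)
    hence "mhat M E i j k = (M *\<^sub>v (B *\<^sub>v vec n3 (S i j))) $ k"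
      using mhat_eq_mult_mat_vec[OF ijk(3)] by simp
    also have "\<dots> = ((M * B) *\<^sub>v vec n3 (S i j)) $ k"
      using M_carrier B by (subst assoc_mult_mat_vec) auto
    finally show ?thesis using B ijk by simp
  qed
  moreover have "E \<in> tensors a b n3" unfolding tensors_def E_def by auto
  ultimately show ?thesis by blast
qed

lemma mhat_ex1:
  "\<exists>!E. E \<in> tensors a b n3 \<and> (\<forall>i<a. \<forall>j<b. \<forall>k<n3. mhat M E i j k = S i j k)"
  using mhat_surj[of a b S] mhat_inject[of _ a b] by (metis (no_types, lifting))

lemma mprod_mhat:
  "mprod M n1 n2 l C D \<in> tensors n1 l n3 \<and>
   (\<forall>i<n1. \<forall>j<l. \<forall>k<n3. mhat M (mprod M n1 n2 l C D) i j k = (\<Sum>m<n2. mhat M C i m k * mhat M D m j k))"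
  unfolding mprod_def dim_row_M by (rule theI'[OF mhat_ex1])

lemma ctrans_mhat:
  "ctrans M n1 n2 A \<in> tensors n2 n1 n3 \<and>
   (\<forall>i<n2. \<forall>j<n1. \<forall>k<n3. mhat M (ctrans M n1 n2 A) i j k = cnj (mhat M A j i k))"
  unfolding ctrans_def dim_row_M by (rule theI'[OF mhat_ex1])

definition slice :: "nat \<Rightarrow> nat \<Rightarrow> tensor \<Rightarrow> nat \<Rightarrow> complex mat" where
  "slice a b T k = mat a b (\<lambda>(i,j). mhat M T i j k)"

lemma slice_carrier_mat[simp]: "slice a b T k \<in> carrier_mat a b"
  by (simp add: slice_def)

lemma mprod_in_tensors[simp]: "mprod M n1 n2 l C D \<in> tensors n1 l n3"
  using mprod_mhat by blast

lemma ctrans_in_tensors[simp]: "ctrans M n1 n2 A \<in> tensors n2 n1 n3"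
  using ctrans_mhat by blast

lemma slice_mprod[simp]:
  "k < n3 \<Longrightarrow> slice n1 l (mprod M n1 n2 l C D) k = slice n1 n2 C k * slice n2 l D k"
  using mprod_mhat[of n1 n2 l C D]
  by (intro eq_matI) (auto simp: slice_def scalar_prod_def lessThan_atLeast0)

lemma slice_ctrans[simp]:
  "k < n3 \<Longrightarrow> slice n2 n1 (ctrans M n1 n2 A) k = adjoint (slice n1 n2 A k)"
  using ctrans_mhat[of n1 n2 A] by (intro eq_matI) (auto simp: slice_def)

lemma tensors_eq_iff_slices:
  assumes "E \<in> tensors a b n3" and "F \<in> tensors a b n3"
  shows "E = F \<longleftrightarrow> (\<forall>k<n3. slice a b E k = slice a b F k)"
proof
  assume slices: "\<forall>k<n3. slice a b E k = slice a b F k"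
  have "mhat M E i j k = mhat M F i j k" if "i < a" "j < b" "k < n3" for i j k
  proof -
    have "slice a b E k $$ (i,j) = slice a b F k $$ (i,j)" using slices that by simp
    thus ?thesis using that by (simp add: slice_def)
  qed
  with assms show "E = F" by (rule mhat_inject)
qed simp

lemma exists_tensor_slices:
  assumes "\<And>k. k < n3 \<Longrightarrow> S k \<in> carrier_mat a b"
  shows "\<exists>E \<in> tensors a b n3. \<forall>k<n3. slice a b E k = S k"
proof -
  obtain E where E: "E \<in> tensors a b n3" and mhat: "\<forall>i<a. \<forall>j<b. \<forall>k<n3. mhat M E i j k = S k $$ (i,j)"
    using mhat_surj[of a b "\<lambda>i j k. S k $$ (i,j)"] by blast
  have "slice a b E k = S k" if "k < n3" for k
    using assms[OF that] mhat that by (intro eq_matI) (auto simp: slice_def)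
  with E show ?thesis by blast
qed

lemma mpinv_conditions_iff_slices:
  assumes A: "A \<in> tensors n1 n2 n3" and W: "W \<in> tensors n2 n1 n3"
  shows "(mprod M n1 n1 n2 (mprod M n1 n2 n1 A W) A = A \<and>
     mprod M n2 n2 n1 (mprod M n2 n1 n2 W A) W = W \<and>
     ctrans M n1 n1 (mprod M n1 n2 n1 A W) = mprod M n1 n2 n1 A W \<and>
     ctrans M n2 n2 (mprod M n2 n1 n2 W A) = mprod M n2 n1 n2 W A)
   \<longleftrightarrow> (\<forall>k<n3. moore_penrose (slice n1 n2 A k) (slice n2 n1 W k))"
  by (simp add: tensors_eq_iff_slices[OF mprod_in_tensors A] tensors_eq_iff_slices[OF mprod_in_tensors W]
      tensors_eq_iff_slices[OF ctrans_in_tensors mprod_in_tensors] moore_penrose_def) blast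

lemma mpinv_slice_moore_penrose:
  assumes A: "A \<in> tensors n1 n2 n3" and k: "k < n3"
  shows "moore_penrose (slice n1 n2 A k) (slice n2 n1 (mpinv M n1 n2 A) k)"
proof -
  let ?mp = "\<lambda>W. W \<in> tensors n2 n1 n3 \<and> (\<forall>k<n3. moore_penrose (slice n1 n2 A k) (slice n2 n1 W k))"
  have "\<forall>k. \<exists>W. W \<in> carrier_mat n2 n1 \<and> moore_penrose (slice n1 n2 A k) W"
    by (meson moore_penrose_exists slice_carrier_mat)
  then obtain S where S: "\<And>k. S k \<in> carrier_mat n2 n1 \<and> moore_penrose (slice n1 n2 A k) (S k)"
    by metis
  then obtain W0 where "W0 \<in> tensors n2 n1 n3" "\<forall>k<n3. slice n2 n1 W0 k = S k"
    using exists_tensor_slices[of S n2 n1] by blast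
  with S have W0: "?mp W0" by simp
  have "mpinv M n1 n2 A = W0"
    unfolding mpinv_def dim_row_M
  proof (rule the_equality)
    fix W assume "W \<in> tensors n2 n1 n3 \<and> mprod M n1 n1 n2 (mprod M n1 n2 n1 A W) A = A \<and>
     mprod M n2 n2 n1 (mprod M n2 n1 n2 W A) W = W \<and>
     ctrans M n1 n1 (mprod M n1 n2 n1 A W) = mprod M n1 n2 n1 A W \<and>
     ctrans M n2 n2 (mprod M n2 n1 n2 W A) = mprod M n2 n1 n2 W A"
    hence W: "?mp W" using mpinv_conditions_iff_slices[OF A] by blast
    have "\<forall>k<n3. slice n2 n1 W k = slice n2 n1 W0 k"
      using W W0 moore_penrose_unique[OF slice_carrier_mat slice_carrier_mat slice_carrier_mat] by blast
    with W W0 show "W = W0" by (simp add: tensors_eq_iff_slices[of W n2 n1 W0])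
  qed (use W0 mpinv_conditions_iff_slices[OF A] in blast)
  with W0 k show ?thesis by simp
qed

lemma inv1_slice_g_inverse:
  assumes "Am \<in> inv1 M n1 n2 A" and "k < n3"
  shows "slice n1 n2 A k * slice n2 n1 Am k * slice n1 n2 A k = slice n1 n2 A k"
proof -
  from assms(1) have "mprod M n1 n1 n2 (mprod M n1 n2 n1 A Am) A = A" by (simp add: inv1_def)
  from arg_cong[OF this, of "\<lambda>T. slice n1 n2 T k"] show ?thesis using assms(2) by simp
qed

lemma one_star_conditions_iff:
  assumes A: "A \<in> tensors n1 n2 n3" and Am: "Am \<in> inv1 M n1 n2 A" and X: "X \<in> tensors n2 n1 n3"
  defines "P \<equiv> ctrans M n2 n1 (mpinv M n1 n2 A)"
  shows "(mprod M n2 n2 n1 (mprod M n2 n1 n2 X P) X = X \<and>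
          mprod M n1 n2 n1 A X = mprod M n1 n2 n1 A (ctrans M n1 n2 A) \<and>
          mprod M n2 n1 n2 X P = mprod M n2 n1 n2 Am A)
    \<longleftrightarrow> X = one_star M n1 n2 A Am"
proof -
  let ?A = "slice n1 n2 A" and ?G = "slice n2 n1 Am" and ?X = "slice n2 n1 X"
    and ?W = "slice n2 n1 (mpinv M n1 n2 A)"
  have "(mprod M n2 n2 n1 (mprod M n2 n1 n2 X P) X = X \<and>
          mprod M n1 n2 n1 A X = mprod M n1 n2 n1 A (ctrans M n1 n2 A) \<and>
          mprod M n2 n1 n2 X P = mprod M n2 n1 n2 Am A)
    \<longleftrightarrow> (\<forall>k<n3. ?X k * adjoint (?W k) * ?X k = ?X k \<and> ?A k * ?X k = ?A k * adjoint (?A k)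
                  \<and> ?X k * adjoint (?W k) = ?G k * ?A k)"
    unfolding P_def
    by (simp add: tensors_eq_iff_slices[OF mprod_in_tensors X]
        tensors_eq_iff_slices[OF mprod_in_tensors mprod_in_tensors]) blast
  also have "\<dots> \<longleftrightarrow> (\<forall>k<n3. ?X k = ?G k * ?A k * adjoint (?A k))"
    using one_star_mat_iff[OF slice_carrier_mat slice_carrier_mat inv1_slice_g_inverse[OF Am]
        slice_carrier_mat mpinv_slice_moore_penrose[OF A] slice_carrier_mat]
    by simp
  also have "\<dots> \<longleftrightarrow> X = one_star M n1 n2 A Am"
    unfolding one_star_def by (simp add: tensors_eq_iff_slices[OF X mprod_in_tensors])
  finally show ?thesis .
qed

end

theorem theorem3p10:
  fixes M :: "complex mat" and n1 n2 n3 :: nat and A Am :: tensor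
  assumes "M \<in> carrier_mat n3 n3" and "invertible_mat M"
    and "A \<in> tensors n1 n2 n3"
    and "Am \<in> inv1 M n1 n2 A"
  shows "let X0 = one_star M n1 n2 A Am;
             P = ctrans M n2 n1 (mpinv M n1 n2 A);
             sat = (\<lambda>X. mprod M n2 n2 n1 (mprod M n2 n1 n2 X P) X = X \<and>
                        mprod M n1 n2 n1 A X = mprod M n1 n2 n1 A (ctrans M n1 n2 A) \<and>
                        mprod M n2 n1 n2 X P = mprod M n2 n1 n2 Am A)
         in X0 \<in> tensors n2 n1 n3 \<and> sat X0 \<and>
            (\<forall>X \<in> tensors n2 n1 n3. sat X \<longrightarrow> X = X0)"
proof -
  interpret mode3_transform M n3 using assms(1,2) by unfold_locales
  have "one_star M n1 n2 A Am \<in> tensors n2 n1 n3"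
    unfolding one_star_def by (rule mprod_in_tensors)
  with one_star_conditions_iff[OF assms(3,4)] show ?thesis
    unfolding Let_def by blast
qed

end
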